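(* Let $q$ be a power of an odd prime, let $r\ge1$ be an integer and $t=2r+1$. If for some $\mu\in\mathbb{F}_q$ the polynomial $x^{2r+1}-\mu\in\mathbb{F}_q[x]$ is irreducible, then \[ \chi(G_{q^t})\le\frac{2r+5}{3}\,q^{\frac{4r}{3}+1}+(2r+1)q^{r+1}. \]
   Context: For a power $Q$ of an odd prime, the graph $G_Q$ has vertex set $\mathbb{F}_Q\times\mathbb{F}_Q$, and distinct vertices $(x_1,x_2)$, $(y_1,y_2)$ are adjacent if and only if $(x_1+y_1)^2=x_2+y_2$; $G_Q$ has no loops. $\chi$ denotes the chromatic number. *)

theory Defs
  imports Complex_Main "HOL-Computational_Algebra.Polynomial" "HOL-Computational_Algebra.Primes" "HOL-Library.Cardinality"
begin

definition G_adj :: "('K::field \<times> 'K) \<Rightarrow> ('K \<times> 'K) \<Rightarrow> bool" where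
  "G_adj u v \<longleftrightarrow> u \<noteq> v \<and> (fst u + fst v)^2 = snd u + snd v"

definition proper_colouring :: "('v \<Rightarrow> 'v \<Rightarrow> bool) \<Rightarrow> 'v set \<Rightarrow> nat \<Rightarrow> ('v \<Rightarrow> nat) \<Rightarrow> bool" where
  "proper_colouring E V k f \<longleftrightarrow>
     (\<forall>v\<in>V. f v < k) \<and> (\<forall>u\<in>V. \<forall>v\<in>V. E u v \<longrightarrow> f u \<noteq> f v)"

definition chromatic_number :: "('v \<Rightarrow> 'v \<Rightarrow> bool) \<Rightarrow> 'v set \<Rightarrow> nat" where
  "chromatic_number E V = (LEAST k. \<exists>f. proper_colouring E V k f)"

end

theory Submission
  imports Defs "HOL-Algebra.Multiplicative_Group" "HOL-Number_Theory.Residues"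
    "HOL-Library.FuncSet" "HOL-Library.Countable_Set"
begin

text \<open>
  We prove the sharper bound
  \<open>\<chi>(G\<^sub>q\<^sub>^\<^sub>t) \<le> 1 + 2t q\<^sup>r\<^sup>+\<^sup>1\<close> by an explicit colouring and then compare it with the stated bound.

  The colouring rests on a Kummer basis.  Irreducibility of \<open>x\<^sup>t - \<mu>\<close> over \<open>F\<^sub>q\<close> forces every
  prime factor of \<open>t\<close> to divide \<open>q - 1\<close>; an elementary lifting-the-exponent argument on
  geometric sums then yields \<open>\<theta> \<in> F\<^sub>q\<^sub>^\<^sub>t\<close> with \<open>\<theta>\<^sup>t \<in> F\<^sub>q\<close> and \<open>t\<close> distinct conjugates, so
  \<open>1, \<theta>, \<dots>, \<theta>\<^sup>t\<^sup>-\<^sup>1\<close> is an \<open>F\<^sub>q\<close>-basis in which multiplication is graded by \<open>\<int>/t\<close>.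

  For adjacent \<open>u = (x\<^sub>1, x\<^sub>2)\<close>, \<open>v = (y\<^sub>1, y\<^sub>2)\<close> the excesses \<open>e(u) = x\<^sub>2 - 2x\<^sub>1\<^sup>2\<close> satisfy
  \<open>e(u) + e(v) = -(x\<^sub>1 - y\<^sub>1)\<^sup>2\<close>.  A vertex is coloured by the first index \<open>m\<close> with
  \<open>e(u)\<^sub>m \<noteq> 0\<close>, the sign of \<open>e(u)\<^sub>m\<close>, and the coordinates of \<open>x\<^sub>1\<close> outside an \<open>r\<close>-element window
  \<open>W(m)\<close> with \<open>m \<notin> W(m) + W(m)\<close>.  Equal colours force \<open>x\<^sub>1 - y\<^sub>1\<close> to be supported on \<open>W(m)\<close>,
  so \<open>(x\<^sub>1 - y\<^sub>1)\<^sup>2\<close> has zero \<open>m\<close>-th coordinate and \<open>e(u)\<^sub>m = -e(v)\<^sub>m\<close>, contradicting the signs.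
\<close>

(* HOL-Algebra's polynomial constants would shadow those of the polynomial library. *)
hide_const (open) UnivPoly.monom UnivPoly.coeff

text \<open>Geometric sums \<open>1 + x + \<dots> + x\<^sup>d\<^sup>-\<^sup>1\<close> over \<open>\<nat>\<close>; \<open>|F\<^sub>q\<^sub>^\<^sub>t\<^sup>*| = (q - 1) \<cdot> geom_sum q t\<close>.\<close>
definition geom_sum :: "nat \<Rightarrow> nat \<Rightarrow> nat" where
  "geom_sum x d = (\<Sum>i<d. x ^ i)"

lemma geom_sum_Suc: "geom_sum x (Suc d) = geom_sum x d + x ^ d"
  by (simp add: geom_sum_def)

lemma geom_sum_add: "geom_sum x (a + b) = geom_sum x a + x ^ a * geom_sum x b"
  by (induction b) (simp_all add: geom_sum_def algebra_simps power_add)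

lemma geom_sum_mult: "geom_sum x (a * b) = geom_sum x a * geom_sum (x ^ a) b"
proof (induction b)
  case (Suc b)
  have "geom_sum x (a * Suc b) = geom_sum x (a * b) + x ^ (a * b) * geom_sum x a"
    using geom_sum_add[of x "a * b" a] by (simp add: add.commute)
  then show ?case
    using Suc by (simp add: geom_sum_Suc algebra_simps power_mult)
qed (simp add: geom_sum_def)

text \<open>The closed form, in truncated natural-number arithmetic (also valid for \<open>x = 0\<close>).\<close>
lemma geom_sum_closed_form: "(x - 1) * geom_sum x d = x ^ d - 1"
proof (cases "x = 0")
  case False
  have pos: "1 \<le> x ^ d" using False by simp
  have "int ((x - 1) * geom_sum x d) = int x ^ d - 1"
    using False by (simp add: geom_sum_def of_nat_diff power_diff_1_eq)
  also have "\<dots> = int (x ^ d - 1)" using pos by (simp add: of_nat_diff)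
  finally show ?thesis by (simp only: of_nat_eq_iff)
qed (cases d; simp add: geom_sum_def)

text \<open>If \<open>x \<equiv> 1\<close> then each of the \<open>d\<close> terms is \<open>\<equiv> 1\<close>.\<close>
lemma geom_sum_cong_one:
  assumes "[x = 1] (mod l)"
  shows "[geom_sum x d = d] (mod l)"
proof (induction d)
  case (Suc d)
  have "[x ^ d = 1] (mod l)" using cong_pow[OF assms, of d] by simp
  then show ?case using Suc cong_add unfolding geom_sum_Suc by fastforce
qed (simp add: geom_sum_def)

text \<open>The prime step of lifting the exponent: for an odd prime \<open>l\<close> with \<open>x \<equiv> 1 (mod l)\<close>, the sum
  \<open>geom_sum x l\<close> is divisible by \<open>l\<close> exactly once, as \<open>x\<^sup>i = 1 + (x - 1) geom_sum x i\<close> gives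
  \<open>geom_sum x l \<equiv> l + (x - 1) (0 + 1 + \<dots> + (l - 1)) \<equiv> l (mod l\<^sup>2)\<close>.\<close>
lemma geom_sum_prime_multiple:
  assumes l: "prime l" "odd l" and x: "[x = 1] (mod l)"
  shows "\<exists>u. geom_sum x l = l * u \<and> [u = 1] (mod l)"
proof -
  have "x \<noteq> 0" using cong_dvd_iff[OF x] l(1) by (metis dvd_0_right not_prime_unit)
  then have pow: "x ^ i = 1 + (x - 1) * geom_sum x i" for i
    using geom_sum_closed_form[of x i] by simp
  have split: "geom_sum x l = l + (x - 1) * (\<Sum>i<l. geom_sum x i)"
    unfolding geom_sum_def[of x l] pow sum.distrib sum_distrib_left by simp
  obtain k where k: "l = 2 * k + 1" using l(2) oddE by blast
  have "(\<Sum>i<l. i) = l * k"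
    using Sum_Ico_nat[of 0 l] k by (simp add: lessThan_atLeast0)
  moreover have "[(\<Sum>i<l. geom_sum x i) = (\<Sum>i<l. i)] (mod l)"
    by (rule cong_sum) (use geom_sum_cong_one[OF x] in auto)
  ultimately have "l dvd (\<Sum>i<l. geom_sum x i)" using cong_dvd_iff by fastforce
  then obtain a where a: "(\<Sum>i<l. geom_sum x i) = l * a" ..
  have "l dvd x - 1" using x \<open>x \<noteq> 0\<close> by (simp add: cong_altdef_nat cong_sym_eq)
  then obtain b where b: "x - 1 = l * b" ..
  have "geom_sum x l = l * (1 + l * (a * b))"
    unfolding split a b by (simp add: algebra_simps)
  moreover have "[1 + l * (a * b) = 1] (mod l)"
    using cong_add[OF cong_refl[of 1] cong_mult_self_left[of l "a * b"]] by simp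
  ultimately show ?thesis by blast
qed

text \<open>If \<open>geom_sum x l = l * u\<close> as above, then \<open>u\<close> is prime to every number all of whose
  prime factors divide \<open>x - 1\<close>: a common prime factor would divide \<open>geom_sum x l \<equiv> l\<close>,
  hence equal \<open>l\<close>, while \<open>u \<equiv> 1 (mod l)\<close>.\<close>
lemma coprime_geom_sum_cofactor:
  assumes l: "prime l" and u: "geom_sum x l = l * u" "[u = 1] (mod l)"
    and s: "\<And>p. prime p \<Longrightarrow> p dvd s \<Longrightarrow> [x = 1] (mod p)"
  shows "coprime s u"
proof (rule ccontr)
  assume "\<not> coprime s u"
  then obtain c where c: "c dvd s" "c dvd u" "\<not> is_unit c" by (rule not_coprimeE)
  then obtain p where "prime p" "p dvd c" using prime_factor_nat by auto
  then have p: "prime p" "p dvd s" "p dvd u" using c dvd_trans by blast+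
  have "p dvd geom_sum x l" using p(3) u(1) by simp
  moreover have "[geom_sum x l = l] (mod p)" using geom_sum_cong_one[OF s[OF p(1,2)]] .
  ultimately have "p dvd l" using cong_dvd_iff by blast
  then have "p = l" using l p(1) by (simp add: primes_dvd_imp_eq)
  then have "l dvd 1" using p(3) u(2) cong_dvd_iff by blast
  then show False using l by simp
qed

text \<open>Induction on \<open>t\<close>, peeling off one prime factor \<open>l\<close> via \<open>geom_sum_mult\<close>.\<close>
lemma dvd_geom_sum_iff:
  assumes "odd t" and "\<And>p. prime p \<Longrightarrow> p dvd t \<Longrightarrow> [x = 1] (mod p)"
  shows "t dvd geom_sum x d \<longleftrightarrow> t dvd d"
  using assms
proof (induction t arbitrary: x d rule: less_induct)
  case (less t)
  show ?case
  proof (cases "t = 1")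
    case False
    then obtain l where l: "prime l" "l dvd t" using prime_factor_nat by blast
    obtain s where ts: "t = l * s" using l(2) ..
    have l1: "l > 1" using l(1) prime_gt_1_nat by blast
    have odds: "odd l" "odd s" using ts less.prems(1) by auto
    have "s < t" using ts l1 odds(2) by (simp add: odd_pos)
    have x_l: "[x = 1] (mod l)" using less.prems(2) l by blast
    have x_s: "[x = 1] (mod p)" if "prime p" "p dvd s" for p
      using less.prems(2) that ts by simp
    have IH: "s dvd geom_sum (x ^ l) d' \<longleftrightarrow> s dvd d'" for d'
      by (rule less.IH[OF \<open>s < t\<close> odds(2)])
        (use cong_pow[OF x_s, of _ l] in simp)
    obtain u where u: "geom_sum x l = l * u" "[u = 1] (mod l)"
      using geom_sum_prime_multiple[OF l(1) odds(1) x_l] by blast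
    have cop: "coprime s u" by (rule coprime_geom_sum_cofactor[OF l(1) u x_s])
    show ?thesis
    proof
      assume t_dvd: "t dvd geom_sum x d"
      have "[geom_sum x d = d] (mod l)" by (rule geom_sum_cong_one[OF x_l])
      moreover have "l dvd geom_sum x d" using t_dvd ts dvd_mult_left by blast
      ultimately obtain d' where d: "d = l * d'" using cong_dvd_iff by blast
      have "s dvd u * geom_sum (x ^ l) d'"
        using t_dvd l1 unfolding ts d geom_sum_mult u(1) by simp
      then have "s dvd d'" using cop IH coprime_dvd_mult_right_iff by blast
      then show "t dvd d" using d ts by simp
    next
      assume "t dvd d"
      then obtain k where "d = t * k" ..
      then have d: "d = l * (s * k)" using ts by simp
      show "t dvd geom_sum x d"
        using IH[of "s * k"] unfolding ts d geom_sum_mult u(1) by simp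
    qed
  qed simp
qed

lemma card_field_ge_2: "CARD('a::{finite,field}) \<ge> 2"
proof -
  have "card {0, 1::'a} \<le> CARD('a)" by (rule card_mono) simp_all
  then show ?thesis by simp
qed

text \<open>Fermat's little theorem for a finite field, proved by permuting its units.\<close>
lemma power_card_minus_one:
  fixes x :: "'a::{finite,field}"
  assumes "x \<noteq> 0"
  shows "x ^ (CARD('a) - 1) = 1"
proof -
  let ?U = "UNIV - {0::'a}"
  have "(\<Prod>y\<in>?U. x * y) = (\<Prod>y\<in>?U. y)"
    by (rule prod.reindex_bij_witness[of _ "\<lambda>y. y / x" "\<lambda>y. x * y"]) (use assms in auto)
  moreover have "(\<Prod>y\<in>?U. x * y) = x ^ card ?U * (\<Prod>y\<in>?U. y)"
    by (simp add: prod.distrib)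
  moreover have "(\<Prod>y\<in>?U. y) \<noteq> 0" by (simp add: prod_zero_iff)
  ultimately have "x ^ card ?U = 1" by (metis mult_cancel_right1)
  then show ?thesis by (simp add: card_Diff_singleton)
qed

text \<open>If \<open>l\<close> is prime to the order of the multiplicative group, every element is an
  \<open>l\<close>-th power, since \<open>x \<mapsto> x\<^sup>l\<close> is injective.\<close>
lemma surj_power_coprime:
  assumes cop: "coprime l (CARD('a::{finite,field}) - 1)" and "l > 0"
  shows "surj (\<lambda>x::'a. x ^ l)"
proof -
  have "x = y" if eq: "x ^ l = y ^ l" for x y :: 'a
  proof (cases "y = 0")
    case True
    then show ?thesis using eq \<open>l > 0\<close> by (simp add: power_0_left)
  next
    case False
    define w where "w = x / y"
    have w_l: "w ^ l = 1" using eq False by (simp add: w_def power_divide)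
    have "w \<noteq> 0" using eq False \<open>l > 0\<close> by (auto simp: w_def power_0_left)
    then have w_N: "w ^ (CARD('a) - 1) = 1" by (rule power_card_minus_one)
    obtain a b where ab: "l * a = (CARD('a) - 1) * b + 1"
      using bezout_nat[of l "CARD('a) - 1"] cop \<open>l > 0\<close> by auto
    have "w = w ^ ((CARD('a) - 1) * b + 1)" using w_N by (simp add: power_add power_mult)
    also have "\<dots> = 1" unfolding ab[symmetric] power_mult w_l by simp
    finally have "w = 1" .
    then show ?thesis using False by (simp add: w_def)
  qed
  then have "inj (\<lambda>x::'a. x ^ l)" by (rule injI)
  then show ?thesis by (simp add: finite_UNIV_inj_surj)
qed

text \<open>Irreducibility of \<open>x\<^sup>t - \<mu>\<close> forces every prime factor \<open>l\<close> of \<open>t\<close> to divide \<open>|F| - 1\<close>: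
  otherwise \<open>\<mu> = \<beta>\<^sup>l\<close>, and \<open>x\<^sup>t - \<beta>\<^sup>l\<close> has the proper factor \<open>x\<^sup>t\<^sup>/\<^sup>l - \<beta>\<close>.\<close>
lemma prime_factor_of_irreducible_binomial:
  fixes \<mu> :: "'a::{finite,field}"
  assumes irr: "irreducible (monom 1 t - [:\<mu>:])" and "t > 0" and l: "prime l" "l dvd t"
  shows "[CARD('a) = 1] (mod l)"
proof (rule ccontr)
  assume "\<not> [CARD('a) = 1] (mod l)"
  then have "\<not> l dvd CARD('a) - 1"
    using card_field_ge_2[where 'a='a] by (simp add: cong_altdef_nat cong_sym_eq)
  then have "coprime l (CARD('a) - 1)" using l(1) by (simp add: prime_imp_coprime)
  then obtain \<beta> :: 'a where \<beta>: "\<mu> = \<beta> ^ l"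
    using surj_power_coprime[of l] l(1) prime_gt_0_nat by (metis surjD)
  obtain s where ts: "t = l * s" using l(2) ..
  have "l > 1" using l(1) prime_gt_1_nat by blast
  then have s: "0 < s" "s < t" using ts \<open>t > 0\<close> by auto
  define A :: "'a poly" where "A = monom 1 s - [:\<beta>:]"
  define B :: "'a poly" where "B = (\<Sum>i<l. [:\<beta>:] ^ (l - Suc i) * monom 1 s ^ i)"
  have "monom 1 t - [:\<mu>:] = monom 1 s ^ l - [:\<beta>:] ^ l"
    unfolding \<beta> monom_power poly_const_pow ts by (simp add: mult.commute)
  also have "\<dots> = A * B" unfolding A_def B_def by (rule power_diff_sumr2)
  finally have factor: "monom 1 t - [:\<mu>:] = A * B" .
  have deg: "degree (monom 1 k - [:c:]) = k" if "k > 0" for k and c :: 'a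
  proof -
    have minus: "monom 1 k - [:c:] = monom 1 k + [:-c:]" by simp
    show ?thesis
      unfolding minus using that by (subst degree_add_eq_left) (auto simp: degree_monom_eq)
  qed
  have "A * B \<noteq> 0" using irr factor by (auto simp: irreducible_def)
  then have "degree A + degree B = t"
    using deg[OF \<open>t > 0\<close>, of \<mu>] unfolding factor by (simp add: degree_mult_eq)
  then have "\<not> is_unit A" "\<not> is_unit B"
    using deg[OF s(1)] s \<open>A * B \<noteq> 0\<close> unfolding A_def by (auto simp: is_unit_iff_degree)
  then show False using irreducibleD[OF irr factor] by blast
qed

text \<open>A type-class field, viewed as a field in the sense of HOL-Algebra; used only to import
  the cyclicity of the multiplicative group of a finite field.\<close>
definition class_ring :: "'a::field ring" where
  "class_ring = \<lparr>carrier = UNIV, monoid.mult = (*), one = 1, ring.zero = 0, add = (+)\<rparr>"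

lemma field_class_ring: "field (class_ring :: 'a::field ring)"
proof -
  have "\<exists>y. x + y = 0" for x :: 'a
    using add.right_inverse by blast
  moreover have "x \<noteq> 0 \<Longrightarrow> \<exists>y. x * y = 1" for x :: 'a
    by (rule exI[of _ "inverse x"]) auto
  ultimately show ?thesis
    unfolding class_ring_def by unfold_locales (auto simp: algebra_simps Units_def)
qed

lemma class_ring_pow: "x [^]\<^bsub>(class_ring :: 'a::field ring)\<^esub> (n::nat) = x ^ n"
  by (induction n) (simp_all add: class_ring_def nat_pow_def mult.commute)

lemma exists_primitive_element:
  "\<exists>g::'a::{finite,field}. g \<noteq> 0 \<and> (\<forall>i j. g ^ i = g ^ j \<longleftrightarrow> [i = j] (mod CARD('a) - 1))"
proof -
  let ?N = "CARD('a) - 1"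
  have fin: "finite (carrier (class_ring :: 'a ring))" unfolding class_ring_def by simp
  obtain g where g: "g \<in> carrier (mult_of (class_ring :: 'a ring))"
    and gen: "carrier (mult_of (class_ring :: 'a ring)) = {g [^]\<^bsub>class_ring\<^esub> i | i::nat. i \<in> UNIV}"
    using field.finite_field_mult_group_has_gen[OF field_class_ring fin] by blast
  have units: "carrier (mult_of (class_ring :: 'a ring)) = UNIV - {0}"
    by (simp add: carrier_mult_of class_ring_def)
  have "g \<noteq> 0" using g units by (simp add: class_ring_def)
  have reduce: "g ^ i = g ^ (i mod ?N)" for i
  proof -
    have "g ^ i = (g ^ ?N) ^ (i div ?N) * g ^ (i mod ?N)"
      by (simp flip: power_add power_mult)
    then show ?thesis using power_card_minus_one[OF \<open>g \<noteq> 0\<close>] by simp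
  qed
  have N_pos: "?N > 0" using card_field_ge_2[where 'a='a] by simp
  have "UNIV - {0} \<subseteq> (\<lambda>i. g ^ i) ` {..<?N}"
  proof
    fix x :: 'a assume "x \<in> UNIV - {0}"
    then obtain i :: nat where "x = g ^ i" using gen units by (auto simp: class_ring_pow)
    moreover have "i mod ?N < ?N" using N_pos by simp
    ultimately show "x \<in> (\<lambda>i. g ^ i) ` {..<?N}" using reduce by blast
  qed
  moreover have "(\<lambda>i. g ^ i) ` {..<?N} \<subseteq> UNIV - {0}" using \<open>g \<noteq> 0\<close> by auto
  ultimately have "(\<lambda>i. g ^ i) ` {..<?N} = UNIV - {0}" by blast
  then have inj: "inj_on (\<lambda>i. g ^ i) {..<?N}"
    by (intro eq_card_imp_inj_on) (simp_all add: card_Diff_singleton)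
  have "g ^ i = g ^ j \<longleftrightarrow> i mod ?N = j mod ?N" for i j
  proof
    assume "g ^ i = g ^ j"
    then have "g ^ (i mod ?N) = g ^ (j mod ?N)" using reduce by metis
    then show "i mod ?N = j mod ?N" using inj_onD[OF inj] N_pos by simp
  qed (metis reduce)
  then have "g ^ i = g ^ j \<longleftrightarrow> [i = j] (mod ?N)" for i j by (simp add: cong_def)
  then show ?thesis using \<open>g \<noteq> 0\<close> by blast
qed

lemma prime_CHAR_finite_field: "prime CHAR('a::{finite,field})"
  by (rule prime_CHAR_semidom) (rule finite_imp_CHAR_pos, simp)

lemma CHAR_eq_of_card_prime_power:
  assumes "prime p" and "CARD('a::{finite,field}) = p ^ m"
  shows "CHAR('a) = p"
proof -
  have "CHAR('a) dvd p ^ m" using CHAR_dvd_CARD[where 'a='a] assms(2) by simp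
  then show ?thesis
    using prime_CHAR_finite_field[where 'a='a] assms(1) by (metis prime_dvd_power primes_dvd_imp_eq)
qed

lemma frobenius_add:
  fixes x y :: "'a::{finite,field}"
  assumes "q = CHAR('a) ^ n"
  shows "(x + y) ^ q = x ^ q + y ^ q"
  by (rule freshmans_dream'[OF prime_CHAR_finite_field assms])

lemma frobenius_sum:
  fixes f :: "'b \<Rightarrow> 'a::{finite,field}"
  assumes "q = CHAR('a) ^ n"
  shows "(sum f A) ^ q = (\<Sum>i\<in>A. f i ^ q)"
  by (rule freshmans_dream_sum'[OF prime_CHAR_finite_field assms])

definition fixed_field :: "nat \<Rightarrow> 'a::field set" where
  "fixed_field q = {x. x ^ q = x}"

lemma card_minus_one_factor:
  assumes "CARD('a::{finite,field}) = q ^ t"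
  shows "CARD('a) - 1 = (q - 1) * geom_sum q t"
  using assms geom_sum_closed_form[of q t] by simp

text \<open>The fixed field has exactly \<open>q\<close> elements: at most \<open>q\<close> as the roots of \<open>x\<^sup>q - x\<close>, and at
  least \<open>q\<close> since it contains \<open>0\<close> and the \<open>q - 1\<close> distinct powers \<open>g\<^sup>M\<^sup>i\<close> of a primitive
  element \<open>g\<close>, where \<open>M = (q\<^sup>t - 1) / (q - 1)\<close>.\<close>
lemma card_fixed_field:
  assumes card: "CARD('a::{finite,field}) = q ^ t" and q: "q \<ge> 2"
  shows "card (fixed_field q :: 'a set) = q"
proof (rule antisym)
  define P :: "'a poly" where "P = monom 1 q - [:0, 1:]"
  have P_deg: "degree P = q"
  proof -
    have "P = monom 1 q + [:0, -1:]" by (simp add: P_def)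
    then show ?thesis using q by (simp add: degree_add_eq_left degree_monom_eq)
  qed
  then have "P \<noteq> 0" using q by auto
  moreover have "fixed_field q = {x. poly P x = 0}"
    by (simp add: P_def fixed_field_def poly_monom)
  ultimately show "card (fixed_field q :: 'a set) \<le> q"
    using card_poly_roots_bound P_deg by metis
next
  obtain g :: 'a where "g \<noteq> 0" and g: "\<And>i j. g ^ i = g ^ j \<longleftrightarrow> [i = j] (mod CARD('a) - 1)"
    using exists_primitive_element by blast
  define M where "M = geom_sum q t"
  have N: "CARD('a) - 1 = (q - 1) * M" unfolding M_def by (rule card_minus_one_factor[OF card])
  then have "M > 0" using card_field_ge_2[where 'a='a] by (auto intro: gr0I)
  have in_F: "g ^ (M * i) \<in> fixed_field q" for i
  proof -
    have "M * i * q = M * i + i * (CARD('a) - 1)" using N q by (simp add: algebra_simps)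
    then have "[M * i * q = M * i] (mod CARD('a) - 1)" by (simp add: cong_def)
    then show ?thesis by (simp add: fixed_field_def g flip: power_mult)
  qed
  have "inj_on (\<lambda>i. g ^ (M * i)) {..<q - 1}"
  proof (rule inj_onI)
    fix i j assume "i \<in> {..<q - 1}" "j \<in> {..<q - 1}" "g ^ (M * i) = g ^ (M * j)"
    then have "M * i = M * j" using N \<open>M > 0\<close> by (simp add: g cong_def mult.commute)
    then show "i = j" using \<open>M > 0\<close> by simp
  qed
  then have "card (insert 0 ((\<lambda>i. g ^ (M * i)) ` {..<q - 1})) = q"
    using \<open>g \<noteq> 0\<close> q by (subst card_insert_disjoint) (auto simp: card_image)
  moreover have "insert 0 ((\<lambda>i. g ^ (M * i)) ` {..<q - 1}) \<subseteq> fixed_field q"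
    using in_F q by (auto simp: fixed_field_def)
  ultimately show "q \<le> card (fixed_field q :: 'a set)"
    by (metis card_mono finite)
qed

text \<open>Take \<open>\<theta> = g\<^sup>M\<^sup>/\<^sup>t\<close> (possible since \<open>t | M\<close>); \<open>\<theta>\<close> has order \<open>(q - 1) t\<close>,
  and \<open>\<theta>\<^sup>q\<^sup>^\<^sup>a = \<theta>\<^sup>q\<^sup>^\<^sup>b\<close> would give \<open>t | geom_sum q (b - a)\<close>, i.e. \<open>t | b - a\<close>.\<close>
lemma exists_kummer_element:
  assumes card: "CARD('a::{finite,field}) = q ^ t" and q: "q \<ge> 2" and "odd t"
    and t_factors: "\<And>p. prime p \<Longrightarrow> p dvd t \<Longrightarrow> [q = 1] (mod p)"
  shows "\<exists>\<theta>::'a. \<theta> ^ t \<in> fixed_field q \<and> inj_on (\<lambda>j. \<theta> ^ (q ^ j)) {..<t}"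
proof -
  obtain g :: 'a where g: "\<And>i j. g ^ i = g ^ j \<longleftrightarrow> [i = j] (mod CARD('a) - 1)"
    using exists_primitive_element by blast
  define M where "M = geom_sum q t"
  have "t dvd M" unfolding M_def using dvd_geom_sum_iff[OF \<open>odd t\<close> t_factors] by simp
  then obtain a where M: "M = t * a" ..
  have N: "CARD('a) - 1 = a * ((q - 1) * t)"
    using card_minus_one_factor[OF card] unfolding M_def[symmetric] M by simp
  then have "a > 0" using card_field_ge_2[where 'a='a] by (auto intro: gr0I)
  define \<theta> where "\<theta> = g ^ a"
  have \<theta>_pow_eq: "\<theta> ^ i = \<theta> ^ j \<longleftrightarrow> [i = j] (mod (q - 1) * t)" for i j
    unfolding \<theta>_def power_mult[symmetric] g N cong_def using \<open>a > 0\<close> by (simp add: mod_mult_mult1)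
  have "[t * q = t] (mod (q - 1) * t)"
    using q by (simp add: cong_altdef_nat algebra_simps diff_mult_distrib2)
  then have fixed: "\<theta> ^ t \<in> fixed_field q"
    unfolding fixed_field_def by (simp add: \<theta>_pow_eq flip: power_mult)
  have coprime_q: "coprime (q ^ i) ((q - 1) * t)" for i
  proof -
    have "coprime q t"
    proof (rule ccontr)
      assume "\<not> coprime q t"
      then obtain c where c: "c dvd q" "c dvd t" "\<not> is_unit c" by (rule not_coprimeE)
      then obtain p where "prime p" "p dvd c" using prime_factor_nat by auto
      then have p: "prime p" "p dvd q" "p dvd t" using c dvd_trans by blast+
      then show False using t_factors[OF p(1,3)] by (metis cong_dvd_iff not_prime_unit)
    qed
    moreover have "coprime q (q - 1)" using q by (metis coprime_diff_one_left_nat coprime_commute gr_zeroI not_numeral_le_zero)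
    ultimately show ?thesis by simp
  qed
  have "\<theta> ^ (q ^ i) \<noteq> \<theta> ^ (q ^ j)" if "i < j" "j < t" for i j
  proof
    assume "\<theta> ^ (q ^ i) = \<theta> ^ (q ^ j)"
    then have "[q ^ i * 1 = q ^ i * q ^ (j - i)] (mod (q - 1) * t)"
      using that by (simp add: \<theta>_pow_eq flip: power_add)
    then have "[q ^ (j - i) = 1] (mod (q - 1) * t)"
      using cong_mult_lcancel_nat[OF coprime_q] cong_sym by blast
    then have "(q - 1) * t dvd q ^ (j - i) - 1"
      using q by (simp add: cong_altdef_nat)
    then have "(q - 1) * t dvd (q - 1) * geom_sum q (j - i)"
      by (simp only: geom_sum_closed_form)
    then have "t dvd geom_sum q (j - i)" using q by simp
    then have "t dvd j - i" using dvd_geom_sum_iff[OF \<open>odd t\<close> t_factors] by blast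
    then show False using that by (simp add: nat_dvd_not_less)
  qed
  then have "inj_on (\<lambda>j. \<theta> ^ (q ^ j)) {..<t}"
    by (intro inj_onI) (metis lessThan_iff linorder_neqE_nat)
  then show ?thesis using fixed by blast
qed

text \<open>The powers \<open>1, \<theta>, \<dots>, \<theta>\<^sup>t\<^sup>-\<^sup>1\<close> then form an \<open>F\<^sub>q\<close>-basis in which
  multiplication is graded by \<open>\<int>/t\<close>: \<open>\<theta>\<^sup>i \<theta>\<^sup>j \<in> F\<^sub>q \<theta>\<^sup>(\<^sup>i\<^sup>+\<^sup>j\<^sup>) \<^sup>m\<^sup>o\<^sup>d \<^sup>t\<close>.\<close>
locale kummer_basis =
  fixes q n t :: nat and \<theta> :: "'a::{finite,field}"
  assumes q_char_power: "q = CHAR('a) ^ n" and n_pos: "n > 0"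
    and card_field: "CARD('a) = q ^ t"
    and theta_pow_fixed: "\<theta> ^ t \<in> fixed_field q"
    and conjugates_distinct: "inj_on (\<lambda>j. \<theta> ^ (q ^ j)) {..<t}"
begin

abbreviation F :: "'a set" where "F \<equiv> fixed_field q"

lemma q_ge_2: "q \<ge> 2"
proof -
  have "2 \<le> CHAR('a)" using prime_CHAR_finite_field prime_ge_2_nat by blast
  also have "\<dots> \<le> q"
    unfolding q_char_power using n_pos prime_gt_0_nat[OF prime_CHAR_finite_field[where 'a='a]]
    by (intro self_le_power) auto
  finally show ?thesis .
qed

lemma t_pos: "t > 0"
  using card_field card_field_ge_2[where 'a='a] by (auto intro: gr0I)

text \<open>Every power \<open>q\<^sup>j\<close> of \<open>q\<close> is again a power of the characteristic.\<close>
lemma frobenius_power_add: "(x + y) ^ (q ^ j) = x ^ (q ^ j) + y ^ (q ^ j)" for x y :: 'a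
  by (rule frobenius_add[where n = "n * j"]) (simp add: q_char_power power_mult)

lemma frobenius_power_sum: "(sum f A) ^ (q ^ j) = (\<Sum>i\<in>A. f i ^ (q ^ j))" for f :: "'b \<Rightarrow> 'a"
  by (rule frobenius_sum[where n = "n * j"]) (simp add: q_char_power power_mult)

lemma fixed_power: "x \<in> F \<Longrightarrow> x ^ (q ^ j) = x"
  by (induction j) (simp_all add: fixed_field_def power_mult)

lemma F_0: "0 \<in> F" and F_1: "1 \<in> F"
  using q_ge_2 by (simp_all add: fixed_field_def)

lemma F_add: "x \<in> F \<Longrightarrow> y \<in> F \<Longrightarrow> x + y \<in> F"
  using frobenius_power_add[of x y 1] by (simp add: fixed_field_def)

lemma F_mult: "x \<in> F \<Longrightarrow> y \<in> F \<Longrightarrow> x * y \<in> F"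
  by (simp add: fixed_field_def power_mult_distrib)

lemma F_uminus: "x \<in> F \<Longrightarrow> - x \<in> F"
proof -
  assume "x \<in> F"
  have "0 = x ^ q + (- x) ^ q" using frobenius_power_add[of x "- x" 1] q_ge_2 by (simp add: power_0_left)
  then show "- x \<in> F" using \<open>x \<in> F\<close> by (simp add: fixed_field_def eq_neg_iff_add_eq_0 add.commute)
qed

lemma F_diff: "x \<in> F \<Longrightarrow> y \<in> F \<Longrightarrow> x - y \<in> F"
  using F_add[of x "- y"] F_uminus[of y] by simp

lemma F_power: "x \<in> F \<Longrightarrow> x ^ k \<in> F"
  by (induction k) (simp_all add: F_1 F_mult)

lemma F_sum: "(\<And>i. i \<in> A \<Longrightarrow> f i \<in> F) \<Longrightarrow> sum f A \<in> F"
  by (induction A rule: infinite_finite_induct) (simp_all add: F_0 F_add)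

lemma card_F: "card F = q"
  by (rule card_fixed_field[OF card_field q_ge_2])

text \<open>Linear independence of \<open>1, \<theta>, \<dots>, \<theta>\<^sup>t\<^sup>-\<^sup>1\<close> over \<open>F\<^sub>q\<close>: a vanishing combination gives a
  polynomial of degree \<open>< t\<close> over \<open>F\<^sub>q\<close> with the \<open>t\<close> distinct roots \<open>\<theta>\<^sup>q\<^sup>^\<^sup>j\<close>.\<close>
lemma kummer_independent:
  assumes c_F: "\<And>i. i < t \<Longrightarrow> c i \<in> F" and zero: "(\<Sum>i<t. c i * \<theta> ^ i) = 0" and "i < t"
  shows "c i = 0"
proof -
  define P where "P = (\<Sum>i<t. monom (c i) i)"
  have coeff_P: "coeff P k = (if k < t then c k else 0)" for k
    unfolding P_def by (simp add: coeff_sum coeff_monom)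
  have "poly P (\<theta> ^ (q ^ j)) = 0" for j
  proof -
    have "poly P (\<theta> ^ (q ^ j)) = (\<Sum>i<t. (c i * \<theta> ^ i) ^ (q ^ j))"
      unfolding P_def poly_sum poly_monom
    proof (intro sum.cong refl)
      fix i assume "i \<in> {..<t}"
      have "(c i * \<theta> ^ i) ^ (q ^ j) = c i ^ (q ^ j) * (\<theta> ^ (q ^ j)) ^ i"
        by (simp only: power_mult_distrib power_mult[symmetric] mult.commute)
      also have "\<dots> = c i * (\<theta> ^ (q ^ j)) ^ i"
        using c_F \<open>i \<in> {..<t}\<close> by (simp add: fixed_power)
      finally show "c i * (\<theta> ^ q ^ j) ^ i = (c i * \<theta> ^ i) ^ q ^ j" by simp
    qed
    also have "\<dots> = 0" using zero q_ge_2 by (simp flip: frobenius_power_sum)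
    finally show ?thesis .
  qed
  then have "(\<lambda>j. \<theta> ^ (q ^ j)) ` {..<t} \<subseteq> {x. poly P x = 0}" by auto
  then have "card ((\<lambda>j. \<theta> ^ (q ^ j)) ` {..<t}) \<le> card {x. poly P x = 0}"
    by (intro card_mono) simp_all
  then have many_roots: "t \<le> card {x. poly P x = 0}"
    using conjugates_distinct by (simp add: card_image)
  have "degree P < t"
    using t_pos by (intro degree_lessI) (auto simp: coeff_P)
  then have "P = 0"
    using card_poly_roots_bound[of P] many_roots by fastforce
  then show ?thesis using coeff_P[of i] \<open>i < t\<close> by simp
qed

definition expand :: "(nat \<Rightarrow> 'a) \<Rightarrow> 'a" where
  "expand c = (\<Sum>i<t. c i * \<theta> ^ i)"

definition coefficient_space :: "(nat \<Rightarrow> 'a) set" where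
  "coefficient_space = PiE {..<t} (\<lambda>_. F)"

definition coord :: "'a \<Rightarrow> nat \<Rightarrow> 'a" where
  "coord x = the_inv_into coefficient_space expand x"

text \<open>Expansion is injective by independence, hence bijective as both sides have \<open>q\<^sup>t\<close> elements.\<close>
lemma bij_expand: "bij_betw expand coefficient_space UNIV"
proof -
  have "inj_on expand coefficient_space"
  proof (rule inj_onI)
    fix c c' assume c: "c \<in> coefficient_space" "c' \<in> coefficient_space" "expand c = expand c'"
    have "(\<Sum>i<t. (c i - c' i) * \<theta> ^ i) = 0"
      using c(3) unfolding expand_def by (simp add: algebra_simps sum_subtractf)
    then have "c i - c' i = 0" if "i < t" for i
      using c(1,2) that by (intro kummer_independent[of "\<lambda>i. c i - c' i"] F_diff)
        (auto simp: coefficient_space_def)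
    then show "c = c'"
      using c(1,2) unfolding coefficient_space_def by (intro extensionalityI) (auto simp: PiE_def)
  qed
  moreover have "card coefficient_space = CARD('a)"
    by (simp add: coefficient_space_def card_PiE card_F card_field)
  ultimately show ?thesis
    by (simp add: bij_betw_def card_image card_eq_UNIV_imp_eq_UNIV)
qed

lemma coord_in_F: "i < t \<Longrightarrow> coord x i \<in> F"
  using the_inv_into_into[OF bij_betw_imp_inj_on[OF bij_expand], of x] bij_expand
  by (auto simp: coord_def coefficient_space_def bij_betw_def)

lemma expand_coord: "x = (\<Sum>i<t. coord x i * \<theta> ^ i)"
  using f_the_inv_into_f_bij_betw[OF bij_expand, of x] by (simp add: coord_def expand_def)

lemma coord_unique:
  assumes "\<And>i. i < t \<Longrightarrow> d i \<in> F" and "x = (\<Sum>i<t. d i * \<theta> ^ i)" and "i < t"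
  shows "coord x i = d i"
proof -
  have "restrict d {..<t} \<in> coefficient_space" using assms(1) by (simp add: coefficient_space_def)
  moreover have "expand (restrict d {..<t}) = x" using assms(2) by (simp add: expand_def)
  ultimately have "coord x = restrict d {..<t}"
    unfolding coord_def using the_inv_into_f_f[OF bij_betw_imp_inj_on[OF bij_expand]] by blast
  then show ?thesis using assms(3) by simp
qed

lemma coord_add: "i < t \<Longrightarrow> coord (x + y) i = coord x i + coord y i"
  by (rule coord_unique) (simp_all add: F_add coord_in_F distrib_right sum.distrib
      flip: expand_coord)

lemma coord_diff: "i < t \<Longrightarrow> coord (x - y) i = coord x i - coord y i"
  by (rule coord_unique) (simp_all add: F_diff coord_in_F left_diff_distrib sum_subtractf
      flip: expand_coord)

lemma coord_0: "i < t \<Longrightarrow> coord 0 i = 0"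
  by (rule coord_unique) (simp_all add: F_0)

lemma coords_zero_imp_zero: "(\<And>i. i < t \<Longrightarrow> coord x i = 0) \<Longrightarrow> x = 0"
  using expand_coord[of x] by simp

text \<open>The grading: \<open>\<theta>\<^sup>k = (\<theta>\<^sup>t)\<^sup>k \<^sup>d\<^sup>i\<^sup>v \<^sup>t \<theta>\<^sup>k \<^sup>m\<^sup>o\<^sup>d \<^sup>t\<close> with \<open>\<theta>\<^sup>t \<in> F\<^sub>q\<close>.\<close>
lemma coord_square_vanishes:
  assumes I: "I \<subseteq> {..<t}" and m: "m < t" and avoid: "\<And>i j. i \<in> I \<Longrightarrow> j \<in> I \<Longrightarrow> (i + j) mod t \<noteq> m"
    and supp: "\<And>k. k < t \<Longrightarrow> k \<notin> I \<Longrightarrow> coord w k = 0"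
  shows "coord (w ^ 2) m = 0"
proof -
  define c where "c = coord w"
  define X where "X i j = c i * c j * (\<theta> ^ t) ^ ((i + j) div t)" for i j
  define d where "d k = (\<Sum>i\<in>I. \<Sum>j\<in>I. if (i + j) mod t = k then X i j else 0)" for k
  have "w = (\<Sum>i<t. c i * \<theta> ^ i)" unfolding c_def by (rule expand_coord)
  also have "\<dots> = (\<Sum>i\<in>I. c i * \<theta> ^ i)"
    using I supp by (intro sum.mono_neutral_right) (auto simp: c_def)
  finally have w: "w = (\<Sum>i\<in>I. c i * \<theta> ^ i)" .
  have reduce: "\<theta> ^ k = (\<theta> ^ t) ^ (k div t) * \<theta> ^ (k mod t)" for k
  proof -
    have "\<theta> ^ k = \<theta> ^ (t * (k div t) + k mod t)" by simp
    then show ?thesis by (simp only: power_add power_mult)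
  qed
  have "w ^ 2 = (\<Sum>i\<in>I. \<Sum>j\<in>I. X i j * \<theta> ^ ((i + j) mod t))"
    unfolding power2_eq_square w sum_product
    by (intro sum.cong refl) (simp add: X_def reduce[of "_ + _"] power_add[symmetric] algebra_simps)
  also have "\<dots> = (\<Sum>i\<in>I. \<Sum>j\<in>I. \<Sum>k<t. (if (i + j) mod t = k then X i j else 0) * \<theta> ^ k)"
    using t_pos by (intro sum.cong refl) (simp add: if_distrib[of "\<lambda>x. x * _"] cong: if_cong)
  also have "\<dots> = (\<Sum>k<t. d k * \<theta> ^ k)"
    unfolding d_def sum_distrib_right by (subst sum.swap) (subst (2) sum.swap, rule refl)
  finally have "w ^ 2 = (\<Sum>k<t. d k * \<theta> ^ k)" .
  moreover have "d k \<in> F" for k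
    unfolding d_def X_def c_def using I theta_pow_fixed
    by (intro F_sum) (auto intro!: F_mult F_power coord_in_F F_0)
  ultimately have "coord (w ^ 2) m = d m" using m by (intro coord_unique) auto
  also have "d m = 0" using avoid by (simp add: d_def)
  finally show ?thesis .
qed

end

lemma chromatic_number_le_card:
  fixes col :: "'v \<Rightarrow> 'c"
  assumes "finite C" and "\<And>v. v \<in> V \<Longrightarrow> col v \<in> C"
    and "\<And>u v. u \<in> V \<Longrightarrow> v \<in> V \<Longrightarrow> E u v \<Longrightarrow> col u \<noteq> col v"
  shows "chromatic_number E V \<le> card C"
proof -
  obtain h where h: "bij_betw h C {0..<card C}" using ex_bij_betw_finite_nat[OF assms(1)] by blast
  have "proper_colouring E V (card C) (h \<circ> col)"
    unfolding proper_colouring_def using assms(2,3) h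
    by (auto simp: bij_betw_def dest: inj_onD)
  then show ?thesis unfolding chromatic_number_def by (intro Least_le) blast
qed

text \<open>Along an edge \<open>(x\<^sub>1 + y\<^sub>1)\<^sup>2 = x\<^sub>2 + y\<^sub>2\<close>
  the two excesses add up to \<open>-(x\<^sub>1 - y\<^sub>1)\<^sup>2\<close>; the colouring exploits exactly this.\<close>
definition excess :: "'a::comm_ring_1 \<times> 'a \<Rightarrow> 'a" where
  "excess v = snd v - 2 * fst v ^ 2"

lemma adjacent_excess_sum:
  fixes u v :: "'a::field \<times> 'a"
  assumes "G_adj u v"
  shows "(fst u - fst v) ^ 2 + excess u + excess v = 0"
  using assms by (simp add: G_adj_def excess_def power2_eq_square algebra_simps)

lemma excess_zero_independent:
  fixes u v :: "'a::field \<times> 'a"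
  assumes "G_adj u v" and "excess u = 0"
  shows "excess v \<noteq> 0"
proof
  assume "excess v = 0"
  then have "fst u = fst v" using adjacent_excess_sum[OF assms(1)] assms(2) by simp
  moreover from this have "snd u = snd v" using assms(2) \<open>excess v = 0\<close> by (simp add: excess_def)
  ultimately show False using assms(1) by (simp add: G_adj_def prod_eq_iff)
qed

text \<open>A choice of ``sign'' on a finite type: \<open>c\<close> and \<open>-c\<close> get different signs whenever they
  differ, obtained by comparing their positions in an enumeration of the type.\<close>
definition sign_choice :: "'a::{finite,uminus} \<Rightarrow> bool" where
  "sign_choice c \<longleftrightarrow> to_nat_on (UNIV :: 'a set) c < to_nat_on (UNIV :: 'a set) (- c)"

lemma sign_choice_uminus:
  fixes c :: "'a::{finite,group_add}"
  assumes "c \<noteq> - c"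
  shows "sign_choice c \<noteq> sign_choice (- c)"
proof -
  let ?idx = "to_nat_on (UNIV :: 'a set)"
  have "?idx c \<noteq> ?idx (- c)"
    using assms inj_on_to_nat_on[of "UNIV :: 'a set"] by (auto simp: countable_finite dest: inj_onD)
  then consider "?idx c < ?idx (- c)" | "?idx (- c) < ?idx c" by linarith
  then show ?thesis by cases (auto simp: sign_choice_def)
qed

locale window_colouring = kummer_basis +
  fixes r :: nat
  assumes t_eq: "t = 2 * r + 1" and q_odd: "odd q"
begin

definition window :: "nat \<Rightarrow> nat set" where
  "window m = (\<lambda>j. (m * (r + 1) + j) mod t) ` {1..r}"

lemma window_subset: "window m \<subseteq> {..<t}"
  using t_pos by (auto simp: window_def)

lemma card_window: "card (window m) = r"
proof -
  have "inj_on (\<lambda>j. (m * (r + 1) + j) mod t) {1..r}"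
  proof (rule inj_onI)
    fix a b assume ab: "a \<in> {1..r}" "b \<in> {1..r}" "(m * (r + 1) + a) mod t = (m * (r + 1) + b) mod t"
    have "[m * (r + 1) + a = m * (r + 1) + b] (mod t)" unfolding cong_def by (rule ab(3))
    then have "[a = b] (mod t)" by (simp only: cong_add_lcancel_nat)
    then show "a = b" using ab(1,2) t_eq by (simp add: cong_def)
  qed
  then show ?thesis by (simp add: window_def card_image)
qed

text \<open>Sums of two window elements are \<open>2m(r+1) + a + b \<equiv> m + (a + b)\<close> with \<open>0 < a + b < t\<close>.\<close>
lemma window_sum_avoids:
  assumes "m < t" "i \<in> window m" "j \<in> window m"
  shows "(i + j) mod t \<noteq> m"
proof
  assume sum: "(i + j) mod t = m"
  obtain a b where ab: "a \<in> {1..r}" "b \<in> {1..r}"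
    "i = (m * (r + 1) + a) mod t" "j = (m * (r + 1) + b) mod t"
    using assms(2,3) unfolding window_def by blast
  have "[i + j = (m * (r + 1) + a) + (m * (r + 1) + b)] (mod t)"
    unfolding ab(3,4) by (intro cong_add) (simp_all add: cong_def)
  moreover have "(m * (r + 1) + a) + (m * (r + 1) + b) = m * t + (m + (a + b))"
    using t_eq by (simp add: algebra_simps)
  ultimately have "[i + j = m * t + (m + (a + b))] (mod t)" by metis
  moreover have "[m * t + (m + (a + b)) = m + (a + b)] (mod t)" by (simp add: cong_def)
  ultimately have "[i + j = m + (a + b)] (mod t)" by (rule cong_trans)
  moreover have "[i + j = m] (mod t)" using sum assms(1) by (simp add: cong_def)
  ultimately have "[m + (a + b) = m + 0] (mod t)" by (metis add_0_right cong_sym cong_trans)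
  then have "t dvd a + b" by (simp only: cong_add_lcancel_nat cong_0_iff)
  moreover have "0 < a + b" "a + b < t" using ab(1,2) t_eq by auto
  ultimately show False by (simp add: nat_dvd_not_less)
qed

text \<open>The characteristic is odd, so \<open>c \<noteq> -c\<close> for \<open>c \<noteq> 0\<close>.\<close>
lemma two_neq_zero: "(2::'a) \<noteq> 0"
proof
  assume "(2::'a) = 0"
  then have "CHAR('a) dvd 2" using of_nat_eq_0_iff_char_dvd[of 2, where 'a='a] by simp
  then have "CHAR('a) = 2"
    using prime_CHAR_finite_field[where 'a='a] by (simp add: primes_dvd_imp_eq)
  then show False using q_odd q_char_power n_pos by simp
qed

definition lead :: "'a \<times> 'a \<Rightarrow> nat" where
  "lead v = (LEAST i. i < t \<and> coord (excess v) i \<noteq> 0)"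

lemma lead:
  assumes "excess v \<noteq> 0"
  shows "lead v < t" "coord (excess v) (lead v) \<noteq> 0"
proof -
  have "\<exists>i. i < t \<and> coord (excess v) i \<noteq> 0" using coords_zero_imp_zero assms by blast
  then have "lead v < t \<and> coord (excess v) (lead v) \<noteq> 0" unfolding lead_def by (rule LeastI_ex)
  then show "lead v < t" "coord (excess v) (lead v) \<noteq> 0" by auto
qed

definition colour :: "'a \<times> 'a \<Rightarrow> (nat \<times> (nat \<Rightarrow> 'a) \<times> bool) option" where
  "colour v = (if excess v = 0 then None else
     Some (lead v, restrict (coord (fst v)) ({..<t} - window (lead v)),
           sign_choice (coord (excess v) (lead v))))"

definition labels :: "(nat \<times> (nat \<Rightarrow> 'a) \<times> bool) set" where
  "labels = (SIGMA m:{..<t}. PiE ({..<t} - window m) (\<lambda>_. F) \<times> UNIV)"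

definition colours :: "(nat \<times> (nat \<Rightarrow> 'a) \<times> bool) option set" where
  "colours = insert None (Some ` labels)"

lemma finite_colours: "finite colours"
  unfolding colours_def labels_def
  by (intro finite.insertI finite_imageI finite_SigmaI finite_cartesian_product finite_PiE) auto

lemma colour_in_colours: "colour v \<in> colours"
  using lead coord_in_F by (auto simp: colour_def colours_def labels_def)

text \<open>There are \<open>t\<close> leading indices, \<open>q\<^sup>r\<^sup>+\<^sup>1\<close> choices of outside coordinates and \<open>2\<close> signs.\<close>
lemma card_colours: "card colours \<le> 1 + t * (2 * q ^ (r + 1))"
proof -
  have card_outside: "card ({..<t} - window m) = r + 1" for m
  proof -
    have "card ({..<t} - window m) = t - r"
      using card_Diff_subset[OF finite_subset[OF window_subset] window_subset, of m]
      by (simp add: card_window)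
    then show ?thesis using t_eq by simp
  qed
  have "card colours = Suc (card labels)"
    using finite_colours by (simp add: colours_def card_image)
  also have "card labels = (\<Sum>m<t. card (PiE ({..<t} - window m) (\<lambda>_. F) \<times> (UNIV :: bool set)))"
    unfolding labels_def by (rule card_SigmaI) (auto intro!: finite_cartesian_product finite_PiE)
  also have "\<dots> = (\<Sum>m<t. 2 * q ^ (r + 1))"
    by (intro sum.cong refl) (simp add: card_cartesian_product card_PiE card_F card_outside)
  finally show ?thesis by simp
qed

text \<open>Properness: equal colours force \<open>x\<^sub>1 - y\<^sub>1\<close> to live on the window, so its square has zero
  \<open>m\<close>-th coordinate and the excesses have opposite \<open>m\<close>-th coordinates, contradicting the signs.\<close>
lemma colour_proper:
  assumes "G_adj u v"
  shows "colour u \<noteq> colour v"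
proof
  assume same: "colour u = colour v"
  have key: "(fst u - fst v) ^ 2 + excess u + excess v = 0"
    by (rule adjacent_excess_sum[OF assms])
  show False
  proof (cases "excess u = 0")
    case True
    then show False
      using same excess_zero_independent[OF assms True] by (simp add: colour_def)
  next
    case False
    define m where "m = lead u"
    have "excess v \<noteq> 0" using same False by (auto simp: colour_def split: if_splits)
    then have pair: "(lead u, restrict (coord (fst u)) ({..<t} - window (lead u)),
                      sign_choice (coord (excess u) (lead u)))
                   = (lead v, restrict (coord (fst v)) ({..<t} - window (lead v)),
                      sign_choice (coord (excess v) (lead v)))"
      using same False unfolding colour_def by (simp only: if_False option.inject)
    then have "lead v = m" by (simp add: m_def)
    with pair have eq:
      "restrict (coord (fst u)) ({..<t} - window m) = restrict (coord (fst v)) ({..<t} - window m)"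
      "sign_choice (coord (excess u) m) = sign_choice (coord (excess v) m)"
      by (simp_all add: m_def)
    have m: "m < t" "coord (excess u) m \<noteq> 0" using lead[OF False] by (auto simp: m_def)
    have "coord (fst u - fst v) k = 0" if "k < t" "k \<notin> window m" for k
      using that fun_cong[OF eq(1), of k] by (simp add: coord_diff)
    then have "coord ((fst u - fst v) ^ 2) m = 0"
      using window_sum_avoids[OF m(1)] by (intro coord_square_vanishes[OF window_subset m(1)])
    moreover have "coord ((fst u - fst v) ^ 2 + excess u + excess v) m = 0"
      using key m(1) by (simp add: coord_0)
    ultimately have "coord (excess u) m + coord (excess v) m = 0"
      using m(1) by (simp add: coord_add)
    then have opposite: "- coord (excess u) m = coord (excess v) m"
      by (simp only: neg_eq_iff_add_eq_0)
    have "coord (excess u) m \<noteq> - coord (excess u) m"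
    proof
      assume "coord (excess u) m = - coord (excess u) m"
      then have "coord (excess u) m + coord (excess u) m = 0"
        by (rule eq_neg_iff_add_eq_0[THEN iffD1])
      then have "2 * coord (excess u) m = 0" by (simp only: mult_2)
      then show False using m(2) two_neq_zero by simp
    qed
    then show False using eq(2) sign_choice_uminus opposite by metis
  qed
qed

theorem chromatic_number_bound:
  "chromatic_number (G_adj :: 'a \<times> 'a \<Rightarrow> _) UNIV \<le> 1 + t * (2 * q ^ (r + 1))"
proof -
  have "chromatic_number (G_adj :: 'a \<times> 'a \<Rightarrow> _) UNIV \<le> card colours"
    by (rule chromatic_number_le_card[where col = colour])
      (simp_all add: finite_colours colour_in_colours colour_proper)
  then show ?thesis using card_colours by linarith
qed

end

text \<open>Writing
  \<open>q\<^sup>4\<^sup>r\<^sup>/\<^sup>3\<^sup>+\<^sup>1 = q\<^sup>r\<^sup>+\<^sup>1 q\<^sup>r\<^sup>/\<^sup>3\<close>, it suffices that \<open>q\<^sup>r\<^sup>/\<^sup>3 \<ge> 3\<^sup>r\<^sup>/\<^sup>3 \<ge> (36/25)\<^sup>r \<ge> 1 + 11r/25\<close> and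
  \<open>(2r + 5)(1 + 11r/25) \<ge> 3(2r + 1) + 1\<close>.\<close>
lemma cube_root_3_ge: "(36/25 :: real) \<le> 3 powr (1/3)"
proof -
  have "(3 powr (1/3)) ^ 3 = (3::real)"
    by (simp add: powr_realpow[symmetric] powr_powr)
  then have "(36/25) ^ 3 < (3 powr (1/3 :: real)) ^ 3" by (simp add: power3_eq_cube)
  then show ?thesis by (rule power_less_imp_less_base[THEN less_imp_le]) simp
qed

lemma colour_count_le_bound:
  fixes q :: real and r :: nat
  assumes q: "q \<ge> 3"
  shows "1 + real (2 * r + 1) * (2 * q ^ (r + 1))
     \<le> (2 * real r + 5) / 3 * q powr (4 * real r / 3 + 1) + (2 * real r + 1) * q ^ (r + 1)"
proof -
  define X where "X = q ^ (r + 1)"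
  define Y where "Y = q powr (real r / 3)"
  have "q ^ 1 \<le> X" unfolding X_def using q by (intro power_increasing) auto
  then have X: "X \<ge> 3" using q by simp
  have "q powr (4 * real r / 3 + 1) = q powr (real (r + 1) + real r / 3)"
    by (simp add: algebra_simps)
  also have "\<dots> = q powr real (r + 1) * Y" unfolding Y_def by (rule powr_add)
  also have "\<dots> = X * Y" unfolding X_def using q by (subst powr_realpow) auto
  finally have split: "q powr (4 * real r / 3 + 1) = X * Y" .
  have "1 + real r * (11/25) \<le> (1 + 11/25) ^ r" by (rule Bernoulli_inequality) simp
  also have "\<dots> \<le> (3 powr (1/3)) ^ r" using cube_root_3_ge by (intro power_mono) simp_all
  also have "\<dots> = 3 powr (real r / 3)" by (simp add: powr_realpow[symmetric] powr_powr)
  also have "\<dots> \<le> Y" unfolding Y_def using q by (intro powr_mono2) auto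
  finally have Y: "1 + 11/25 * real r \<le> Y" by (simp add: mult.commute)
  have "0 \<le> (real r - 45/44) ^ 2" by simp
  then have "3 * (2 * real r + 1) + 1 \<le> (2 * real r + 5) * (1 + 11/25 * real r)"
    by (simp add: power2_eq_square algebra_simps add_divide_distrib)
  also have "\<dots> \<le> (2 * real r + 5) * Y" using Y by (intro mult_left_mono) auto
  finally have "(3 * (2 * real r + 1) + 1) * X \<le> (2 * real r + 5) * Y * X"
    using X by (intro mult_right_mono) auto
  then show ?thesis
    unfolding split X_def[symmetric] using X by (simp add: algebra_simps)
qed

theorem theorem3p4:
  fixes \<mu> :: "'k::{finite,field}" and r t :: nat
  assumes "\<exists>(p::nat) (n::nat). prime p \<and> odd p \<and> n > 0 \<and> CARD('k) = p ^ n"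
    and "r \<ge> 1" and "t = 2 * r + 1"
    and "CARD('K::{finite,field}) = CARD('k) ^ t"
    and "irreducible (monom 1 (2 * r + 1) - [:\<mu>:])"
  shows "real (chromatic_number (G_adj :: 'K \<times> 'K \<Rightarrow> _) UNIV)
           \<le> (2 * real r + 5) / 3 * real CARD('k) powr (4 * real r / 3 + 1)
             + (2 * real r + 1) * real CARD('k) ^ (r + 1)"
proof -
  obtain p n where p: "prime p" "odd p" and "n > 0" and card_k: "CARD('k) = p ^ n"
    using assms(1) by blast
  define q where "q = CARD('k)"
  have card_K: "CARD('K) = q ^ t" using assms(4) by (simp add: q_def)
  have t_factors: "[q = 1] (mod l)" if "prime l" "l dvd t" for l
    unfolding q_def using prime_factor_of_irreducible_binomial[OF _ _ that] assms(3,5) by simp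
  have "CHAR('K) = p"
    using CHAR_eq_of_card_prime_power[OF p(1)] card_K by (simp add: q_def card_k flip: power_mult)
  then have q_char: "q = CHAR('K) ^ n" by (simp add: q_def card_k)
  have "3 \<le> p" using prime_ge_2_nat[OF p(1)] p(2) by presburger
  also have "p \<le> q" unfolding q_def card_k using \<open>n > 0\<close> \<open>3 \<le> p\<close> by (intro self_le_power) auto
  finally have "q \<ge> 3" .
  obtain \<theta> :: 'K where "\<theta> ^ t \<in> fixed_field q" "inj_on (\<lambda>j. \<theta> ^ (q ^ j)) {..<t}"
    using exists_kummer_element[OF card_K _ _ t_factors] \<open>q \<ge> 3\<close> assms(3) by auto
  moreover have "odd q" unfolding q_def card_k using p(2) by simp
  ultimately interpret window_colouring q n t \<theta> r
    using q_char \<open>n > 0\<close> card_K assms(3) by unfold_locales assumption+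
  have "real (chromatic_number (G_adj :: 'K \<times> 'K \<Rightarrow> _) UNIV) \<le> real (1 + t * (2 * q ^ (r + 1)))"
    using chromatic_number_bound by (simp only: of_nat_le_iff)
  also have "\<dots> = 1 + real t * (2 * real q ^ (r + 1))" by simp
  also have "\<dots> \<le> (2 * real r + 5) / 3 * real q powr (4 * real r / 3 + 1) + (2 * real r + 1) * real q ^ (r + 1)"
    using colour_count_le_bound[of "real q" r] \<open>q \<ge> 3\<close> assms(3) by simp
  finally show ?thesis unfolding q_def .
qed

end
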